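(* Let $q$ be a prime power, $k,b,t$ positive integers and $f:\mathbb{F}_q^k\to\mathrm{Im}(f)$ a function with image $\mathrm{Im}(f)=\{f_1,\ldots,f_E\}$. Then \[ r_b^f(k,t)\le N_b\big(\boldsymbol{B}_f^{(2)}(t,f_1,\ldots,f_E)\big). \]
   Context: For $\boldsymbol{z}=(z_0,\ldots,z_{n-1})\in\mathbb{F}_q^n$, the $b$-symbol distance $d_b(\boldsymbol{z},\boldsymbol{w})$ is the number of $i\in\{0,\ldots,n-1\}$ with $(z_i,\ldots,z_{i+b-1})\neq(w_i,\ldots,w_{i+b-1})$ (indices mod $n$). A systematic encoding $\mathrm{Enc}(\boldsymbol{x})=(\boldsymbol{x},p(\boldsymbol{x}))\in\mathbb{F}_q^{k+r}$ is a function-correcting $b$-symbol code for $f$ if $d_b(\mathrm{Enc}(\boldsymbol{x}_1),\mathrm{Enc}(\boldsymbol{x}_2))\ge 2t+1$ whenever $f(\boldsymbol{x}_1)\ne f(\boldsymbol{x}_2)$; $r_b^f(k,t)$ is the smallest $r$ for which one exists. For an $M\times M$ nonnegative integer matrix $\boldsymbol{B}$, $N_b(\boldsymbol{B})$ is the smallest $r$ such that there exist $\boldsymbol{p}_1,\ldots,\boldsymbol{p}_M\in\mathbb{F}_q^r$ (in some ordering) with $d_b(\boldsymbol{p}_i,\boldsymbol{p}_j)\ge[\boldsymbol{B}]_{ij}$ for all $i,j$. The $b$-symbol distance between function values is $d_b^f(f_i,f_j)=\min\{d_b(\boldsymbol{x}_1,\boldsymbol{x}_2):\boldsymbol{x}_1,\boldsymbol{x}_2\in\mathbb{F}_q^k,\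 f(\boldsymbol{x}_1)=f_i,\ f(\boldsymbol{x}_2)=f_j\}$. The $E\times E$ matrix $\boldsymbol{B}_f^{(2)}(t,f_1,\ldots,f_E)$ has entries $\max\{2t+b-d_b^f(f_i,f_j),0\}$ for $i\ne j$ and $0$ on the diagonal. *)

theory Defs
  imports Main
begin

text \<open>Vectors of F_q^n are lists of length n over a finite field type 'a (q = CARD('a)).\<close>

definition vecs :: "nat \<Rightarrow> 'a list set" where
  "vecs n = {x. length x = n}"

definition bdist :: "nat \<Rightarrow> 'a list \<Rightarrow> 'a list \<Rightarrow> nat" where
  "bdist b z w = card {i. i < length z \<and>
      (\<exists>j<b. z ! ((i + j) mod length z) \<noteq> w ! ((i + j) mod length z))}"

definition is_fcbsc :: "nat \<Rightarrow> nat \<Rightarrow> nat \<Rightarrow> ('a list \<Rightarrow> 'c) \<Rightarrow> ('a list \<Rightarrow> 'a list) \<Rightarrow> nat \<Rightarrow> bool" where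
  "is_fcbsc b k t f p r \<longleftrightarrow>
     (\<forall>x\<in>vecs k. length (p x) = r) \<and>
     (\<forall>x1\<in>vecs k. \<forall>x2\<in>vecs k. f x1 \<noteq> f x2 \<longrightarrow>
         bdist b (x1 @ p x1) (x2 @ p x2) \<ge> 2 * t + 1)"

definition r_bf :: "nat \<Rightarrow> nat \<Rightarrow> nat \<Rightarrow> ('a list \<Rightarrow> 'c) \<Rightarrow> nat" where
  "r_bf b k t f = (LEAST r. \<exists>p. is_fcbsc b k t f p r)"

definition N_b :: "'a itself \<Rightarrow> nat \<Rightarrow> nat \<Rightarrow> (nat \<Rightarrow> nat \<Rightarrow> nat) \<Rightarrow> nat" where
  "N_b _ b M B = (LEAST r. \<exists>P :: nat \<Rightarrow> 'a list.
      (\<forall>i<M. length (P i) = r) \<and> (\<forall>i<M. \<forall>j<M. bdist b (P i) (P j) \<ge> B i j))"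

definition d_bf :: "nat \<Rightarrow> nat \<Rightarrow> ('a list \<Rightarrow> 'c) \<Rightarrow> 'c \<Rightarrow> 'c \<Rightarrow> nat" where
  "d_bf b k f u v = Min {bdist b x1 x2 | x1 x2. x1 \<in> vecs k \<and> x2 \<in> vecs k \<and> f x1 = u \<and> f x2 = v}"

text \<open>Matrix B_f^(2)(t, f_1..f_E), 0-indexed via the list fs; nat subtraction = max{.,0}.\<close>
definition Bf2 :: "nat \<Rightarrow> nat \<Rightarrow> nat \<Rightarrow> ('a list \<Rightarrow> 'c) \<Rightarrow> 'c list \<Rightarrow> nat \<Rightarrow> nat \<Rightarrow> nat" where
  "Bf2 b k t f fs i j = (if i = j then 0 else (2 * t + b) - d_bf b k f (fs ! i) (fs ! j))"

end

theory Submission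
  imports Defs
begin

(* The b-symbol distance of two words is the number of cyclic windows of length b that meet
   the set of positions where the words differ.  When redundancies p1, p2 are appended to
   x1, x2, a window of either block survives unless it wraps around the end of its block;
   a wrapping window of the x-block is lost only if some mismatch of x precedes all mismatches
   of p, and one of the p-block only in the opposite situation.  So only one block loses
   windows, at most b - 1 of them, and
     d_b(x1 p1, x2 p2) >= d_b(x1, x2) + d_b(p1, p2) - (b - 1).
   Taking as redundancy of x the word assigned to f(x) by an optimal realisation of
   B_f^(2) gives d_b >= d_b^f + (2t + b - d_b^f) - (b - 1) = 2t + 1 between encodings
   of inputs with different function values. *)

definition mismatches :: "'a list \<Rightarrow> 'a list \<Rightarrow> nat set" where
  "mismatches z w = {i. i < length z \<and> z ! i \<noteq> w ! i}"

lemma mismatches_subset: "mismatches z w \<subseteq> {..<length z}"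
  by (auto simp: mismatches_def)

definition hitting_windows :: "nat \<Rightarrow> nat \<Rightarrow> nat set \<Rightarrow> nat set" where
  "hitting_windows n b D = {i. i < n \<and> (\<exists>j<b. (i + j) mod n \<in> D)}"

lemma bdist_eq_card_hitting_windows:
  "bdist b z w = card (hitting_windows (length z) b (mismatches z w))"
proof -
  have "(\<exists>j<b. z ! ((i + j) mod length z) \<noteq> w ! ((i + j) mod length z)) \<longleftrightarrow>
      (\<exists>j<b. (i + j) mod length z \<in> mismatches z w)" if "i < length z" for i
  proof -
    have "(i + j) mod length z < length z" for j
      using that by (intro mod_less_divisor) linarith
    then show ?thesis
      unfolding mismatches_def by blast
  qed
  then have "{i. i < length z \<and> (\<exists>j<b. z ! ((i + j) mod length z) \<noteq> w ! ((i + j) mod length z))}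
      = hitting_windows (length z) b (mismatches z w)"
    unfolding hitting_windows_def by blast
  then show ?thesis
    unfolding bdist_def by simp
qed

lemma hitting_windows_subset: "hitting_windows n b D \<subseteq> {..<n}"
  by (auto simp: hitting_windows_def)

lemma hitting_windowsI:
  "i < n \<Longrightarrow> j < b \<Longrightarrow> (i + j) mod n \<in> D \<Longrightarrow> i \<in> hitting_windows n b D"
  unfolding hitting_windows_def by blast

lemma bdist_le_length: "bdist b z w \<le> length z"
  using card_mono[OF _ hitting_windows_subset]
  by (simp add: bdist_eq_card_hitting_windows)

lemma card_mismatches_le_bdist:
  assumes "b > 0"
  shows "card (mismatches z w) \<le> bdist b z w"
proof -
  have "mismatches z w \<subseteq> hitting_windows (length z) b (mismatches z w)"
    using assms by (force simp: hitting_windows_def mismatches_def)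
  then show ?thesis
    by (simp add: bdist_eq_card_hitting_windows card_mono hitting_windows_def)
qed

lemma mismatches_append:
  assumes "length x1 = length x2"
  shows "mismatches (x1 @ p1) (x2 @ p2) = mismatches x1 x2 \<union> (+) (length x1) ` mismatches p1 p2"
proof (intro set_eqI iffI)
  fix i assume i: "i \<in> mismatches (x1 @ p1) (x2 @ p2)"
  show "i \<in> mismatches x1 x2 \<union> (+) (length x1) ` mismatches p1 p2"
  proof (cases "i < length x1")
    case True
    then show ?thesis using i assms by (simp add: mismatches_def nth_append)
  next
    case False
    then have "i - length x1 \<in> mismatches p1 p2"
      using i assms by (simp add: mismatches_def nth_append; linarith)
    moreover have "i = length x1 + (i - length x1)" using False by simp
    ultimately show ?thesis by blast
  qed
next
  fix i assume "i \<in> mismatches x1 x2 \<union> (+) (length x1) ` mismatches p1 p2"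
  then show "i \<in> mismatches (x1 @ p1) (x2 @ p2)"
    using assms by (auto simp: mismatches_def nth_append)
qed

lemma lost_window_first_block:
  assumes "B \<subseteq> {..<r}"
    and hit: "i \<in> hitting_windows k b A"
    and lost: "i \<notin> hitting_windows (k + r) b (A \<union> (+) k ` B)"
  shows "k < i + b \<and> (\<exists>a\<in>A. \<forall>d\<in>B. a < d)"
proof -
  obtain j where "i < k" "j < b" and aA: "(i + j) mod k \<in> A"
    using hit unfolding hitting_windows_def by blast
  define a where "a = (i + j) mod k"
  have wraps: "k \<le> i + j"
  proof (rule ccontr)
    assume "\<not> k \<le> i + j"
    then have "(i + j) mod (k + r) = (i + j) mod k" by simp
    then show False
      using lost hitting_windowsI[of i "k + r" j b] \<open>i < k\<close> \<open>j < b\<close> aA by auto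
  qed
  then have "a + k \<le> i + j"
    unfolding a_def using le_mod_geq[OF wraps] mod_less_eq_dividend[of "i + j - k" k] by linarith
  have "a < d" if "d \<in> B" for d
  proof (rule ccontr)
    assume "\<not> a < d"
    have "(i + (k + d - i)) mod (k + r) = k + d"
      using \<open>i < k\<close> \<open>d \<in> B\<close> assms(1) by auto
    then have "i \<in> hitting_windows (k + r) b (A \<union> (+) k ` B)"
      using hitting_windowsI[of i "k + r" "k + d - i" b] \<open>i < k\<close> \<open>j < b\<close> \<open>d \<in> B\<close>
        \<open>\<not> a < d\<close> \<open>a + k \<le> i + j\<close> by auto
    then show False using lost by contradiction
  qed
  then show ?thesis
    using wraps \<open>j < b\<close> aA a_def by auto
qed

lemma lost_window_second_block:
  assumes "A \<subseteq> {..<k}"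
    and hit: "i \<in> hitting_windows r b B"
    and lost: "k + i \<notin> hitting_windows (k + r) b (A \<union> (+) k ` B)"
  shows "r < i + b \<and> (\<exists>d\<in>B. \<forall>a\<in>A. d < a)"
proof -
  obtain j where "i < r" "j < b" and dB: "(i + j) mod r \<in> B"
    using hit unfolding hitting_windows_def by blast
  define d where "d = (i + j) mod r"
  have wraps: "r \<le> i + j"
  proof (rule ccontr)
    assume "\<not> r \<le> i + j"
    then have "(k + i + j) mod (k + r) = k + (i + j) mod r" by simp
    then show False
      using lost hitting_windowsI[of "k + i" "k + r" j b] \<open>i < r\<close> \<open>j < b\<close> dB
      by (auto simp: add.assoc)
  qed
  then have "d + r \<le> i + j"
    unfolding d_def using le_mod_geq[OF wraps] mod_less_eq_dividend[of "i + j - r" r] by linarith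
  have "d < a" if "a \<in> A" for a
  proof (rule ccontr)
    assume "\<not> d < a"
    have "a < k" using \<open>a \<in> A\<close> assms(1) by auto
    then have "(k + i + (r - i + a)) mod (k + r) = a"
      using \<open>i < r\<close> by (simp add: add.commute add.left_commute)
    then have "k + i \<in> hitting_windows (k + r) b (A \<union> (+) k ` B)"
      using hitting_windowsI[of "k + i" "k + r" "r - i + a" b] \<open>i < r\<close> \<open>j < b\<close> \<open>a \<in> A\<close>
        \<open>\<not> d < a\<close> \<open>d + r \<le> i + j\<close> by auto
    then show False using lost by contradiction
  qed
  then show ?thesis
    using wraps \<open>j < b\<close> dB d_def by auto
qed

lemma card_tail_window_starts: "card {i. i < n \<and> n < i + b} \<le> b - 1"
proof -
  have "{i. i < n \<and> n < i + b} \<subseteq> {n + 1 - b..<n}"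
    by auto
  then have "card {i. i < n \<and> n < i + b} \<le> card {n + 1 - b..<n}"
    by (intro card_mono) auto
  then show ?thesis
    by simp
qed

lemma card_hitting_windows_append:
  assumes A: "A \<subseteq> {..<k}" and B: "B \<subseteq> {..<r}"
  shows "card (hitting_windows k b A) + card (hitting_windows r b B)
    \<le> card (hitting_windows (k + r) b (A \<union> (+) k ` B)) + (b - 1)"
proof -
  let ?W = "hitting_windows (k + r) b (A \<union> (+) k ` B)"
  let ?U = "hitting_windows k b A \<union> (+) k ` hitting_windows r b B"
  obtain L where "?U \<subseteq> ?W \<union> L" and "finite L" and "card L \<le> b - 1"
  proof (cases "\<exists>a\<in>A. \<forall>d\<in>B. a < d")
    case True
    have "i \<in> ?W \<union> {i. i < k \<and> k < i + b}" if "i \<in> hitting_windows k b A" for i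
      using lost_window_first_block[OF B that] hitting_windows_subset that by blast
    moreover have "k + i \<in> ?W" if "i \<in> hitting_windows r b B" for i
      using lost_window_second_block[OF A that] True by (meson less_asym)
    ultimately have "?U \<subseteq> ?W \<union> {i. i < k \<and> k < i + b}"
      by blast
    then show thesis
      using that card_tail_window_starts by simp
  next
    case False
    have "i \<in> ?W" if "i \<in> hitting_windows k b A" for i
      using lost_window_first_block[OF B that] False by blast
    moreover have "k + i \<in> ?W \<union> (+) k ` {i. i < r \<and> r < i + b}"
      if "i \<in> hitting_windows r b B" for i
      using lost_window_second_block[OF A that] hitting_windows_subset that by blast
    ultimately have "?U \<subseteq> ?W \<union> (+) k ` {i. i < r \<and> r < i + b}"
      by blast
    then show thesis
      using that card_image_le[of "{i. i < r \<and> r < i + b}" "(+) k"] card_tail_window_starts[of r b]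
      by simp
  qed
  have fin: "finite (hitting_windows n b D)" for n D
    by (rule finite_subset[OF hitting_windows_subset]) simp
  have "hitting_windows k b A \<inter> (+) k ` hitting_windows r b B = {}"
    using hitting_windows_subset[of k b A] by auto
  then have "card (hitting_windows k b A) + card (hitting_windows r b B) = card ?U"
    by (simp add: card_Un_disjoint card_image fin)
  also have "\<dots> \<le> card (?W \<union> L)"
    using \<open>?U \<subseteq> ?W \<union> L\<close> \<open>finite L\<close> fin by (intro card_mono) auto
  also have "\<dots> \<le> card ?W + card L"
    by (rule card_Un_le)
  finally show ?thesis
    using \<open>card L \<le> b - 1\<close> by linarith
qed

lemma bdist_append:
  assumes "length x1 = length x2"
  shows "bdist b x1 x2 + bdist b p1 p2 \<le> bdist b (x1 @ p1) (x2 @ p2) + (b - 1)"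
  using card_hitting_windows_append[OF mismatches_subset[of x1 x2] mismatches_subset[of p1 p2], of b] assms
  by (simp add: bdist_eq_card_hitting_windows mismatches_append)

lemma exists_vectors_pairwise_bdist_ge:
  assumes "b > 0"
  shows "\<exists>P :: nat \<Rightarrow> 'a::zero_neq_one list. (\<forall>i<M. length (P i) = M * L) \<and>
    (\<forall>i<M. \<forall>j<M. i \<noteq> j \<longrightarrow> L \<le> bdist b (P i) (P j))"
proof -
  define P :: "nat \<Rightarrow> 'a list" where "P i = map (\<lambda>m. if m div L = i then 1 else 0) [0..<M * L]" for i
  have "L \<le> bdist b (P i) (P j)" if "i < M" "i \<noteq> j" for i j
  proof -
    have "m \<in> mismatches (P i) (P j)" if "m \<in> {i * L..<i * L + L}" for m
    proof -
      have "m div L = i"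
        using that by (intro div_nat_eqI) (auto simp: mult.commute)
      moreover have "m < M * L"
        using that \<open>i < M\<close> mult_le_mono1[of "Suc i" M L] by simp
      ultimately show ?thesis
        using \<open>i \<noteq> j\<close> by (simp add: P_def mismatches_def)
    qed
    then have "card {i * L..<i * L + L} \<le> card (mismatches (P i) (P j))"
      by (intro card_mono finite_subset[OF mismatches_subset]) auto
    also have "\<dots> \<le> bdist b (P i) (P j)"
      by (rule card_mismatches_le_bdist[OF assms])
    finally show ?thesis
      by simp
  qed
  moreover have "length (P i) = M * L" for i
    by (simp add: P_def)
  ultimately show ?thesis
    by blast
qed

lemma N_b_attained:
  fixes B :: "nat \<Rightarrow> nat \<Rightarrow> nat"
  assumes "b > 0" and "\<forall>i<M. B i i = 0"
  shows "\<exists>P :: nat \<Rightarrow> 'a::zero_neq_one list. (\<forall>i<M. length (P i) = N_b TYPE('a) b M B) \<and>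
    (\<forall>i<M. \<forall>j<M. B i j \<le> bdist b (P i) (P j))"
proof -
  define L where "L = Max (case_prod B ` ({..<M} \<times> {..<M}))"
  obtain P :: "nat \<Rightarrow> 'a list" where len: "\<forall>i<M. length (P i) = M * L"
    and dist: "\<forall>i<M. \<forall>j<M. i \<noteq> j \<longrightarrow> L \<le> bdist b (P i) (P j)"
    using exists_vectors_pairwise_bdist_ge[OF assms(1)] by blast
  have bounded: "B i j \<le> bdist b (P i) (P j)" if "i < M" "j < M" for i j
  proof (cases "i = j")
    case True
    then show ?thesis using assms(2) that by simp
  next
    case False
    have "B i j \<le> L"
      unfolding L_def using that by (intro Max_ge) auto
    then show ?thesis
      using dist that False by fastforce
  qed
  define feasible where "feasible r \<longleftrightarrow> (\<exists>P :: nat \<Rightarrow> 'a list.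
    (\<forall>i<M. length (P i) = r) \<and> (\<forall>i<M. \<forall>j<M. B i j \<le> bdist b (P i) (P j)))" for r
  have "feasible (M * L)"
    unfolding feasible_def using len bounded by (intro exI[of _ P]) simp
  then have "feasible (LEAST r. feasible r)"
    by (rule LeastI)
  then show ?thesis
    unfolding N_b_def feasible_def .
qed

lemma d_bf_le_bdist:
  assumes "x1 \<in> vecs k" and "x2 \<in> vecs k"
  shows "d_bf b k f (f x1) (f x2) \<le> bdist b x1 x2"
proof -
  let ?S = "{bdist b y1 y2 | y1 y2. y1 \<in> vecs k \<and> y2 \<in> vecs k \<and> f y1 = f x1 \<and> f y2 = f x2}"
  have "?S \<subseteq> {..k}"
    using bdist_le_length by (auto simp: vecs_def)
  then have "finite ?S"
    by (rule finite_subset) simp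
  moreover have "bdist b x1 x2 \<in> ?S"
    using assms by blast
  ultimately show ?thesis
    unfolding d_bf_def by (rule Min_le)
qed

lemma is_fcbsc_via_value_index:
  fixes f :: "'a list \<Rightarrow> 'c" and P :: "nat \<Rightarrow> 'a list"
  assumes "b > 0"
    and index: "\<forall>x\<in>vecs k. ix x < length fs \<and> fs ! ix x = f x"
    and len: "\<forall>i<length fs. length (P i) = r"
    and dist: "\<forall>i<length fs. \<forall>j<length fs. Bf2 b k t f fs i j \<le> bdist b (P i) (P j)"
  shows "is_fcbsc b k t f (P \<circ> ix) r"
  unfolding is_fcbsc_def
proof (intro conjI ballI impI)
  fix x :: "'a list" assume "x \<in> vecs k"
  then show "length ((P \<circ> ix) x) = r"
    using index len by simp
next
  fix x1 x2 :: "'a list" assume x1: "x1 \<in> vecs k" and x2: "x2 \<in> vecs k" and "f x1 \<noteq> f x2"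
  then have "ix x1 \<noteq> ix x2"
    using index by metis
  then have "2 * t + b - d_bf b k f (f x1) (f x2) \<le> bdist b (P (ix x1)) (P (ix x2))"
    using dist index x1 x2 by (force simp: Bf2_def)
  moreover have "d_bf b k f (f x1) (f x2) \<le> bdist b x1 x2"
    using d_bf_le_bdist[OF x1 x2] .
  moreover have "bdist b x1 x2 + bdist b (P (ix x1)) (P (ix x2))
      \<le> bdist b (x1 @ P (ix x1)) (x2 @ P (ix x2)) + (b - 1)"
    using x1 x2 by (intro bdist_append) (simp add: vecs_def)
  ultimately show "2 * t + 1 \<le> bdist b (x1 @ (P \<circ> ix) x1) (x2 @ (P \<circ> ix) x2)"
    using \<open>b > 0\<close> by simp
qed

theorem mainTheorem3:
  fixes f :: "'a::{finite,field} list \<Rightarrow> 'c"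
    and fs :: "'c list"
    and k b t :: nat
  assumes "k > 0" and "b > 0" and "t > 0"
    and "distinct fs"
    and "set fs = f ` vecs k"
  shows "r_bf b k t f \<le> N_b TYPE('a) b (length fs) (Bf2 b k t f fs)"
proof -
  obtain P :: "nat \<Rightarrow> 'a list"
    where len: "\<forall>i<length fs. length (P i) = N_b TYPE('a) b (length fs) (Bf2 b k t f fs)"
      and dist: "\<forall>i<length fs. \<forall>j<length fs. Bf2 b k t f fs i j \<le> bdist b (P i) (P j)"
    using N_b_attained[OF \<open>b > 0\<close>, of "length fs" "Bf2 b k t f fs"] by (auto simp: Bf2_def)
  have "\<forall>x\<in>vecs k. \<exists>i. i < length fs \<and> fs ! i = f x"
    using \<open>set fs = f ` vecs k\<close> by (auto simp: in_set_conv_nth[symmetric])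
  then obtain ix where "\<forall>x\<in>vecs k. ix x < length fs \<and> fs ! ix x = f x"
    by (rule bchoice[elim_format]) blast
  then have "is_fcbsc b k t f (P \<circ> ix) (N_b TYPE('a) b (length fs) (Bf2 b k t f fs))"
    using is_fcbsc_via_value_index[OF \<open>b > 0\<close>] len dist by blast
  then show ?thesis
    unfolding r_bf_def by (intro Least_le) blast
qed

end
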